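(* Let $Q_d$ be the $d$-dimensional hypercube graph, with $n = 2^d$ vertices. Then $\chi_{2K_2}(Q_2) = 2$, $\chi_{2K_2}(Q_3) = 4$, and for every $d \ge 4$, $$\chi_{2K_2}(Q_d) \ge \sqrt{\frac{d}{2d-1}\,2^d} + \frac12 = \sqrt{\frac{n}{2}\cdot\frac{1}{1 - 1/(2\lg n)}} + \frac12,$$ where $\lg$ denotes the base-2 logarithm.
   Context: All graphs are finite and simple. For a fixed bipartite graph $H$, a proper vertex coloring of a graph $G$ is called an $H$-avoiding coloring if for any two color classes, the subgraph of $G$ induced by their union contains no induced subgraph isomorphic to $H$. $\chi_H(G)$ denotes the minimum number of colors in an $H$-avoiding coloring of $G$. $2K_2$ is the disjoint union of two edges. $Q_d$ has vertex set $\{0,1\}^d$, two vertices adjacent iff they differ in exactly one coordinate. *)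

theory Defs
  imports Complex_Main
begin

(* A finite simple graph is given by a vertex set V and a symmetric irreflexive
   adjacency predicate E (only its restriction to V matters). *)

definition has_induced_copy ::
  "'b set \<Rightarrow> ('b \<Rightarrow> 'b \<Rightarrow> bool) \<Rightarrow> ('a \<Rightarrow> 'a \<Rightarrow> bool) \<Rightarrow> 'a set \<Rightarrow> bool" where
  "has_induced_copy VH EH E S \<longleftrightarrow>
     (\<exists>f. inj_on f VH \<and> f ` VH \<subseteq> S \<and>
          (\<forall>a\<in>VH. \<forall>b\<in>VH. E (f a) (f b) \<longleftrightarrow> EH a b))"

definition proper_coloring :: "'a set \<Rightarrow> ('a \<Rightarrow> 'a \<Rightarrow> bool) \<Rightarrow> ('a \<Rightarrow> nat) \<Rightarrow> bool" where
  "proper_coloring V E c \<longleftrightarrow> (\<forall>u\<in>V. \<forall>v\<in>V. E u v \<longrightarrow> c u \<noteq> c v)"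

definition H_avoiding_coloring ::
  "'b set \<Rightarrow> ('b \<Rightarrow> 'b \<Rightarrow> bool) \<Rightarrow> 'a set \<Rightarrow> ('a \<Rightarrow> 'a \<Rightarrow> bool) \<Rightarrow> ('a \<Rightarrow> nat) \<Rightarrow> bool" where
  "H_avoiding_coloring VH EH V E c \<longleftrightarrow>
     proper_coloring V E c \<and>
     (\<forall>i j. \<not> has_induced_copy VH EH E {v\<in>V. c v = i \<or> c v = j})"

definition chi_H ::
  "'b set \<Rightarrow> ('b \<Rightarrow> 'b \<Rightarrow> bool) \<Rightarrow> 'a set \<Rightarrow> ('a \<Rightarrow> 'a \<Rightarrow> bool) \<Rightarrow> nat" where
  "chi_H VH EH V E = (LEAST k. \<exists>c. H_avoiding_coloring VH EH V E c \<and> c ` V \<subseteq> {..<k})"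

definition twoK2_V :: "nat set" where
  "twoK2_V = {0, 1, 2, 3}"

definition twoK2_E :: "nat \<Rightarrow> nat \<Rightarrow> bool" where
  "twoK2_E a b \<longleftrightarrow> {a, b} = {0, 1} \<or> {a, b} = {2, 3}"

definition cube_V :: "nat \<Rightarrow> bool list set" where
  "cube_V d = {xs. length xs = d}"

definition cube_E :: "bool list \<Rightarrow> bool list \<Rightarrow> bool" where
  "cube_E xs ys \<longleftrightarrow> length xs = length ys \<and>
     card {i. i < length xs \<and> xs ! i \<noteq> ys ! i} = 1"

definition chi_2K2_cube :: "nat \<Rightarrow> nat" where
  "chi_2K2_cube d = chi_H twoK2_V twoK2_E (cube_V d) cube_E"

end

theory Submission
  imports Defs
begin

text \<open>
  Count the \<open>d 2\<^sup>d\<close> ordered edges of \<open>Q\<^sub>d\<close> by the ordered pair of colors of their ends.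
  For colors \<open>i \<noteq> j\<close> of a \<open>2K\<^sub>2\<close>-avoiding coloring, the edges between the two classes
  form a \<open>2K\<^sub>2\<close>-free bipartite graph, so the neighborhoods on each side are nested and two
  vertices \<open>x\<close>, \<open>y\<close> of maximum degree are adjacent and meet every edge but those avoiding both.
  Since two vertices of \<open>Q\<^sub>d\<close> have at most two common neighbors, at most one edge avoids
  \<open>x\<close> and \<open>y\<close>, and if both had full degree \<open>d\<close> the two squares through \<open>xy\<close> would
  supply two such edges. Hence two classes span at most \<open>2d - 1\<close> edges, so
  \<open>d 2\<^sup>d \<le> k (k - 1) (2d - 1)\<close> for \<open>k\<close> colors, which rearranges to the bound.
  The small cases are settled by explicit colorings and, for \<open>Q\<^sub>3\<close>, an exhaustive check.
\<close>

section \<open>Bipartite graphs without induced \<open>2K\<^sub>2\<close>\<close>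

definition edges_between :: "('a \<Rightarrow> 'a \<Rightarrow> bool) \<Rightarrow> 'a set \<Rightarrow> 'a set \<Rightarrow> ('a \<times> 'a) set" where
  "edges_between E A B = {(a, b). a \<in> A \<and> b \<in> B \<and> E a b}"

definition bipartite_2K2_free :: "('a \<Rightarrow> 'a \<Rightarrow> bool) \<Rightarrow> 'a set \<Rightarrow> 'a set \<Rightarrow> bool" where
  "bipartite_2K2_free E A B \<longleftrightarrow>
     (\<forall>a\<in>A. \<forall>a'\<in>A. \<forall>b\<in>B. \<forall>b'\<in>B. E a b \<and> E a' b' \<and> a \<noteq> a' \<and> b \<noteq> b' \<longrightarrow> E a b' \<or> E a' b)"

definition K23_free :: "('a \<Rightarrow> 'a \<Rightarrow> bool) \<Rightarrow> bool" where
  "K23_free E \<longleftrightarrow>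
     (\<forall>u v w1 w2 w3. u \<noteq> v \<and> w1 \<noteq> w2 \<and> w1 \<noteq> w3 \<and> w2 \<noteq> w3 \<longrightarrow>
        \<not> (E u w1 \<and> E u w2 \<and> E u w3 \<and> E w1 v \<and> E w2 v \<and> E w3 v))"

lemma K23_freeD:
  assumes "K23_free E" "u \<noteq> v" "w1 \<noteq> w2" "w1 \<noteq> w3" "w2 \<noteq> w3"
    and "E u w1" "E u w2" "E u w3" "E w1 v" "E w2 v" "E w3 v"
  shows False
  using assms unfolding K23_free_def by blast

lemma finite_edges_between: "finite A \<Longrightarrow> finite B \<Longrightarrow> finite (edges_between E A B)"
  by (rule finite_subset[of _ "A \<times> B"]) (auto simp: edges_between_def)

lemma bipartite_2K2_free_converse: "bipartite_2K2_free (\<lambda>u v. E v u) B A \<longleftrightarrow> bipartite_2K2_free E A B"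
  unfolding bipartite_2K2_free_def by blast

text \<open>In a \<open>2K\<^sub>2\<close>-free bipartite graph the neighborhoods of one side form a chain, so a
  vertex of maximum degree sees every vertex of positive degree on the other side.\<close>

lemma max_degree_dominates:
  assumes free: "bipartite_2K2_free E A B" and "finite B"
    and x: "x \<in> A" and max: "\<forall>a\<in>A. card {b\<in>B. E a b} \<le> card {b\<in>B. E x b}"
    and ab: "a \<in> A" "b \<in> B" "E a b"
  shows "E x b"
proof (rule ccontr)
  assume "\<not> E x b"
  have "{b'\<in>B. E x b'} \<subseteq> {b'\<in>B. E a b'}"
  proof safe
    fix b' assume "b' \<in> B" "E x b'"
    then show "E a b'"
      using free ab x \<open>\<not> E x b\<close> unfolding bipartite_2K2_free_def by metis
  qed
  with ab \<open>\<not> E x b\<close> have "{b'\<in>B. E x b'} \<subset> {b'\<in>B. E a b'}"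
    by blast
  then have "card {b'\<in>B. E x b'} < card {b'\<in>B. E a b'}"
    using \<open>finite B\<close> by (simp add: psubset_card_mono)
  with max ab show False
    by force
qed

lemma bipartite_2K2_free_dominating_edge:
  assumes free: "bipartite_2K2_free E A B" and "finite A" "finite B" "edges_between E A B \<noteq> {}"
  obtains x y where "x \<in> A" "y \<in> B" "E x y"
    "\<And>a b. (a, b) \<in> edges_between E A B \<Longrightarrow> E x b \<and> E a y"
proof -
  obtain a0 b0 where e0: "a0 \<in> A" "b0 \<in> B" "E a0 b0"
    using assms(4) by (auto simp: edges_between_def)
  obtain x where x: "x \<in> A" "\<forall>a\<in>A. card {b\<in>B. E a b} \<le> card {b\<in>B. E x b}"
    using ex_has_greatest_nat[of "\<lambda>a. a \<in> A" a0 "\<lambda>a. card {b\<in>B. E a b}" "Suc (card B)"]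
      e0(1) \<open>finite B\<close> by (auto simp: le_imp_less_Suc card_mono)
  obtain y where y: "y \<in> B" "\<forall>b\<in>B. card {a\<in>A. E a b} \<le> card {a\<in>A. E a y}"
    using ex_has_greatest_nat[of "\<lambda>b. b \<in> B" b0 "\<lambda>b. card {a\<in>A. E a b}" "Suc (card A)"]
      e0(2) \<open>finite A\<close> by (auto simp: le_imp_less_Suc card_mono)
  have free': "bipartite_2K2_free (\<lambda>u v. E v u) B A"
    using free by (rule bipartite_2K2_free_converse[THEN iffD2])
  have dom: "E x b \<and> E a y" if "(a, b) \<in> edges_between E A B" for a b
    using that max_degree_dominates[OF free \<open>finite B\<close> x]
      max_degree_dominates[OF free' \<open>finite A\<close> y] by (auto simp: edges_between_def)
  have "E x b0"
    using dom e0 by (auto simp: edges_between_def)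
  then have "E x y"
    using dom x(1) e0(2) by (auto simp: edges_between_def)
  with x(1) y(1) dom show ?thesis
    using that by blast
qed

lemma edges_off_dominating_pair_unique:
  assumes "symp E" "K23_free E" "bipartite_2K2_free E A B"
    and dom: "\<And>a b. (a, b) \<in> edges_between E A B \<Longrightarrow> E x b \<and> E a y" and "E x y"
    and ab: "(a, b) \<in> edges_between E A B" "a \<noteq> x" "b \<noteq> y"
    and ab': "(a', b') \<in> edges_between E A B" "a' \<noteq> x" "b' \<noteq> y"
  shows "(a, b) = (a', b')"
proof -
  have edges: "a \<in> A" "b \<in> B" "E a b" "a' \<in> A" "b' \<in> B" "E a' b'"
    using ab ab' by (auto simp: edges_between_def)
  have to_x: "E x b" "E x b'" and to_y: "E a y" "E a' y"
    using dom ab ab' by auto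
  text \<open>Both edges lie on 4-cycles through \<open>x y\<close>; any edge joining them would give two
    vertices with three common neighbors.\<close>
  have no_cross: False if "b \<noteq> b'" "E u b" "E u b'" "E u y" "u \<noteq> x" for u
    by (rule K23_freeD[of E u x b b' y]) (use assms that to_x in \<open>auto intro: sympD\<close>)
  show ?thesis
  proof (cases "a = a'")
    case True
    then show ?thesis
      using no_cross[of a] edges to_y ab by auto
  next
    case False
    have "b = b' \<Longrightarrow> False"
      by (rule K23_freeD[of E b y x a a']) (use assms edges to_x to_y False in \<open>auto intro: sympD\<close>)
    then have "b \<noteq> b'" by blast
    then have "E a b' \<or> E a' b"
      using \<open>bipartite_2K2_free E A B\<close> edges False unfolding bipartite_2K2_free_def by blast
    then show ?thesis
      using no_cross[of a] no_cross[of a'] \<open>b \<noteq> b'\<close> edges to_y ab ab' by blast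
  qed
qed

lemma card_edges_between_le:
  assumes "finite A" "finite B" "x \<in> A" "E x y"
  shows "card (edges_between E A B) \<le>
    card {b\<in>B. E x b} + (card {a\<in>A. E a y} - 1) +
    card {(a, b) \<in> edges_between E A B. a \<noteq> x \<and> b \<noteq> y}"
proof -
  let ?R = "{(a, b) \<in> edges_between E A B. a \<noteq> x \<and> b \<noteq> y}"
  have "edges_between E A B \<subseteq> Pair x ` {b\<in>B. E x b} \<union> (\<lambda>a. (a, y)) ` ({a\<in>A. E a y} - {x}) \<union> ?R"
    by (auto simp: edges_between_def)
  then have "card (edges_between E A B) \<le>
      card (Pair x ` {b\<in>B. E x b} \<union> (\<lambda>a. (a, y)) ` ({a\<in>A. E a y} - {x}) \<union> ?R)"
    using assms by (intro card_mono) (auto intro: finite_subset[OF _ finite_edges_between])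
  also have "\<dots> \<le> card (Pair x ` {b\<in>B. E x b}) + card ((\<lambda>a. (a, y)) ` ({a\<in>A. E a y} - {x})) + card ?R"
    by (meson card_Un_le add_le_mono1 order_trans)
  also have "\<dots> \<le> card {b\<in>B. E x b} + (card {a\<in>A. E a y} - 1) + card ?R"
    using assms by (simp add: card_image_le card_Diff_singleton inj_on_def card_image)
  finally show ?thesis .
qed

section \<open>\<open>2K\<^sub>2\<close>-avoiding colorings\<close>

definition induced_2K2 :: "('a \<Rightarrow> 'a \<Rightarrow> bool) \<Rightarrow> 'a \<Rightarrow> 'a \<Rightarrow> 'a \<Rightarrow> 'a \<Rightarrow> bool" where
  "induced_2K2 E a b a' b' \<longleftrightarrow> E a b \<and> E a' b' \<and> \<not> E a a' \<and> \<not> E a b' \<and> \<not> E b a' \<and> \<not> E b b'"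

lemma twoK2_E_iff:
  "twoK2_E m n \<longleftrightarrow> (m, n) \<in> {(0, 1), (1, 0), (2, 3), (3, 2)}"
  by (auto simp: twoK2_E_def doubleton_eq_iff)

lemma has_induced_twoK2_iff:
  assumes "symp E" "irreflp E"
  shows "has_induced_copy twoK2_V twoK2_E E S \<longleftrightarrow>
    (\<exists>a b a' b'. a \<in> S \<and> b \<in> S \<and> a' \<in> S \<and> b' \<in> S \<and> induced_2K2 E a b a' b')"
proof
  assume "has_induced_copy twoK2_V twoK2_E E S"
  then obtain f where f: "f ` twoK2_V \<subseteq> S"
    "\<forall>m\<in>twoK2_V. \<forall>n\<in>twoK2_V. E (f m) (f n) \<longleftrightarrow> twoK2_E m n"
    unfolding has_induced_copy_def by blast
  then have "f 0 \<in> S" "f 1 \<in> S" "f 2 \<in> S" "f 3 \<in> S" "induced_2K2 E (f 0) (f 1) (f 2) (f 3)"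
    by (simp_all add: twoK2_V_def induced_2K2_def twoK2_E_iff)
  then show "\<exists>a b a' b'. a \<in> S \<and> b \<in> S \<and> a' \<in> S \<and> b' \<in> S \<and> induced_2K2 E a b a' b'"
    by blast
next
  assume "\<exists>a b a' b'. a \<in> S \<and> b \<in> S \<and> a' \<in> S \<and> b' \<in> S \<and> induced_2K2 E a b a' b'"
  then obtain a b a' b' where in_S: "a \<in> S" "b \<in> S" "a' \<in> S" "b' \<in> S"
    and "E a b" "E a' b'" "\<not> E a a'" "\<not> E a b'" "\<not> E b a'" "\<not> E b b'"
    unfolding induced_2K2_def by blast
  then have adj: "E a b" "E b a" "E a' b'" "E b' a'"
    and non_adj: "\<not> E a a'" "\<not> E a' a" "\<not> E a b'" "\<not> E b' a"
      "\<not> E b a'" "\<not> E a' b" "\<not> E b b'" "\<not> E b' b"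
      "\<not> E a a" "\<not> E b b" "\<not> E a' a'" "\<not> E b' b'"
    using sympD[OF \<open>symp E\<close>] irreflpD[OF \<open>irreflp E\<close>] by blast+
  then have "distinct [a, b, a', b']"
    by auto
  define f where "f = (!) [a, b, a', b']"
  have "inj_on f twoK2_V"
    using \<open>distinct [a, b, a', b']\<close> by (auto simp: inj_on_def twoK2_V_def f_def)
  moreover have "f ` twoK2_V \<subseteq> S"
    using in_S by (simp add: twoK2_V_def f_def)
  moreover have "\<forall>m\<in>twoK2_V. \<forall>n\<in>twoK2_V. E (f m) (f n) \<longleftrightarrow> twoK2_E m n"
    using adj non_adj by (simp add: twoK2_V_def twoK2_E_iff f_def)
  ultimately show "has_induced_copy twoK2_V twoK2_E E S"
    unfolding has_induced_copy_def by (intro exI[of _ f]) simp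
qed

lemma twoK2_avoiding_coloring_iff:
  assumes "symp E" "irreflp E"
  shows "H_avoiding_coloring twoK2_V twoK2_E V E c \<longleftrightarrow> proper_coloring V E c \<and>
    (\<forall>a\<in>V. \<forall>b\<in>V. \<forall>a'\<in>V. \<forall>b'\<in>V. induced_2K2 E a b a' b' \<longrightarrow> 3 \<le> card {c a, c b, c a', c b'})"
  (is "_ \<longleftrightarrow> _ \<and> ?three_colors")
proof (cases "proper_coloring V E c")
  case True
  let ?S = "\<lambda>i j. {v\<in>V. c v = i \<or> c v = j}"
  have "(\<forall>i j. \<not> has_induced_copy twoK2_V twoK2_E E (?S i j)) \<longleftrightarrow> ?three_colors"
  proof
    assume no_copy: "\<forall>i j. \<not> has_induced_copy twoK2_V twoK2_E E (?S i j)"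
    show ?three_colors
    proof (intro ballI impI)
      fix a b a' b' assume in_V: "a \<in> V" "b \<in> V" "a' \<in> V" "b' \<in> V"
        and quad: "induced_2K2 E a b a' b'"
      then have "c a \<noteq> c b"
        using True unfolding proper_coloring_def induced_2K2_def by blast
      show "3 \<le> card {c a, c b, c a', c b'}"
      proof (rule ccontr)
        assume "\<not> 3 \<le> card {c a, c b, c a', c b'}"
        with \<open>c a \<noteq> c b\<close> have "a \<in> ?S (c a) (c b)" "b \<in> ?S (c a) (c b)"
          "a' \<in> ?S (c a) (c b)" "b' \<in> ?S (c a) (c b)"
          using in_V by (auto simp: card_insert_if split: if_splits)
        with quad have "has_induced_copy twoK2_V twoK2_E E (?S (c a) (c b))"
          unfolding has_induced_twoK2_iff[OF assms(1,2)] by blast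
        with no_copy show False
          by blast
      qed
    qed
  next
    assume three: ?three_colors
    show "\<forall>i j. \<not> has_induced_copy twoK2_V twoK2_E E (?S i j)"
    proof (intro allI notI)
      fix i j assume "has_induced_copy twoK2_V twoK2_E E (?S i j)"
      then obtain a b a' b' where "a \<in> ?S i j" "b \<in> ?S i j" "a' \<in> ?S i j" "b' \<in> ?S i j"
        and "induced_2K2 E a b a' b'"
        unfolding has_induced_twoK2_iff[OF assms(1,2)] by blast
      then have "3 \<le> card {c a, c b, c a', c b'}" and "{c a, c b, c a', c b'} \<subseteq> {i, j}"
        using three by auto
      then have "3 \<le> card {i, j}"
        by (meson card_mono finite.emptyI finite.insertI order_trans)
      then show False
        by (simp add: card_insert_if split: if_splits)
    qed
  qed
  with True show ?thesis
    unfolding H_avoiding_coloring_def by blast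
qed (simp add: H_avoiding_coloring_def)

lemma color_classes_bipartite_2K2_free:
  assumes "symp E" "irreflp E"
    and c: "H_avoiding_coloring twoK2_V twoK2_E V E c"
  shows "bipartite_2K2_free E {v\<in>V. c v = i} {v\<in>V. c v = j}"
  unfolding bipartite_2K2_free_def
proof (intro ballI impI)
  fix a a' b b' assume classes: "a \<in> {v\<in>V. c v = i}" "a' \<in> {v\<in>V. c v = i}"
    "b \<in> {v\<in>V. c v = j}" "b' \<in> {v\<in>V. c v = j}"
    and "E a b \<and> E a' b' \<and> a \<noteq> a' \<and> b \<noteq> b'"
  show "E a b' \<or> E a' b"
  proof (rule ccontr)
    assume "\<not> (E a b' \<or> E a' b)"
    moreover have "\<not> E a a'" and "\<not> E b b'"
      using c classes unfolding H_avoiding_coloring_def proper_coloring_def by force+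
    ultimately have "induced_2K2 E a b a' b'"
      using \<open>E a b \<and> E a' b' \<and> a \<noteq> a' \<and> b \<noteq> b'\<close> sympD[OF \<open>symp E\<close>]
      unfolding induced_2K2_def by blast
    then have "3 \<le> card {c a, c b, c a', c b'}"
      using c classes unfolding twoK2_avoiding_coloring_iff[OF assms(1,2)] by blast
    moreover have "{c a, c b, c a', c b'} = {i, j}"
      using classes by auto
    ultimately show False
      by (simp add: card_insert_if split: if_splits)
  qed
qed

lemma injective_coloring_H_avoiding:
  assumes "inj_on c V" "irreflp E" "finite VH" "2 < card VH"
  shows "H_avoiding_coloring VH EH V E c"
  unfolding H_avoiding_coloring_def proper_coloring_def
proof (intro conjI ballI impI allI notI)
  fix u v assume "u \<in> V" "v \<in> V" "E u v" "c u = c v"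
  then show False
    using \<open>inj_on c V\<close> irreflpD[OF \<open>irreflp E\<close>] by (metis inj_onD)
next
  fix i j
  let ?S = "{v\<in>V. c v = i \<or> c v = j}"
  assume "has_induced_copy VH EH E ?S"
  then obtain f where "inj_on f VH" "f ` VH \<subseteq> ?S"
    unfolding has_induced_copy_def by blast
  have "inj_on c ?S"
    using \<open>inj_on c V\<close> by (rule inj_on_subset) blast
  moreover have "c ` ?S \<subseteq> {i, j}"
    by blast
  ultimately have "finite ?S"
    by (meson finite.emptyI finite.insertI finite_imageD finite_subset)
  have "card (f ` VH) \<le> card ?S"
    using \<open>finite ?S\<close> \<open>f ` VH \<subseteq> ?S\<close> by (rule card_mono)
  also have "\<dots> = card (c ` ?S)"
    using \<open>inj_on c ?S\<close> by (simp add: card_image)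
  also have "\<dots> \<le> card {i, j}"
    by (rule card_mono) auto
  also have "\<dots> \<le> 2"
    by (simp add: card_insert_if)
  finally have "card (f ` VH) \<le> 2" .
  with \<open>inj_on f VH\<close> \<open>2 < card VH\<close> show False
    by (simp add: card_image)
qed

lemma chi_H_le:
  "H_avoiding_coloring VH EH V E c \<Longrightarrow> c ` V \<subseteq> {..<k} \<Longrightarrow> chi_H VH EH V E \<le> k"
  unfolding chi_H_def by (rule Least_le) blast

lemma chi_H_coloring_exists:
  assumes "H_avoiding_coloring VH EH V E c" "c ` V \<subseteq> {..<k}"
  shows "\<exists>c. H_avoiding_coloring VH EH V E c \<and> c ` V \<subseteq> {..<chi_H VH EH V E}"
  unfolding chi_H_def by (rule LeastI_ex) (use assms in blast)

lemma card_edges_le_sum_color_pairs: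
  assumes "finite V" "proper_coloring V E c" "c ` V \<subseteq> {..<k}"
  shows "card (edges_between E V V) \<le>
    (\<Sum>i<k. \<Sum>j\<in>{..<k} - {i}. card (edges_between E {v\<in>V. c v = i} {v\<in>V. c v = j}))"
proof -
  let ?D = "\<lambda>i j. edges_between E {v\<in>V. c v = i} {v\<in>V. c v = j}"
  have "edges_between E V V \<subseteq> (\<Union>i<k. \<Union>j\<in>{..<k} - {i}. ?D i j)"
  proof
    fix p assume "p \<in> edges_between E V V"
    then obtain u v where "p = (u, v)" "u \<in> V" "v \<in> V" "E u v"
      by (auto simp: edges_between_def)
    moreover have "c u \<noteq> c v"
      using assms(2) calculation unfolding proper_coloring_def by blast
    ultimately show "p \<in> (\<Union>i<k. \<Union>j\<in>{..<k} - {i}. ?D i j)"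
      using assms(3) by (auto simp: edges_between_def)
  qed
  then have "card (edges_between E V V) \<le> card (\<Union>i<k. \<Union>j\<in>{..<k} - {i}. ?D i j)"
    using assms(1) by (intro card_mono) (auto intro!: finite_edges_between)
  also have "\<dots> \<le> (\<Sum>i<k. card (\<Union>j\<in>{..<k} - {i}. ?D i j))"
    by (rule card_UN_le) simp
  also have "\<dots> \<le> (\<Sum>i<k. \<Sum>j\<in>{..<k} - {i}. card (?D i j))"
    by (intro sum_mono card_UN_le) simp
  finally show ?thesis .
qed

section \<open>The hypercube\<close>

definition flip_at :: "bool list \<Rightarrow> nat \<Rightarrow> bool list" where
  "flip_at xs i = xs[i := \<not> xs ! i]"

definition diff_positions :: "bool list \<Rightarrow> bool list \<Rightarrow> nat set" where
  "diff_positions xs ys = {i. i < length xs \<and> xs ! i \<noteq> ys ! i}"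

lemma length_flip_at [simp]: "length (flip_at xs i) = length xs"
  by (simp add: flip_at_def)

lemma nth_flip_at: "j < length xs \<Longrightarrow> flip_at xs i ! j = (if i = j then \<not> xs ! j else xs ! j)"
  by (simp add: flip_at_def nth_list_update)

lemma flip_at_flip_at [simp]: "flip_at (flip_at xs i) i = xs"
  by (cases "i < length xs") (simp_all add: flip_at_def list_update_beyond)

lemma flip_at_commute: "flip_at (flip_at xs i) j = flip_at (flip_at xs j) i"
  by (cases "i = j") (simp_all add: flip_at_def list_update_swap)

lemma diff_positions_flip_at_flip_at:
  assumes "i < length xs" "j < length xs" "i \<noteq> j"
  shows "diff_positions xs (flip_at (flip_at xs i) j) = {i, j}"
proof -
  have "flip_at (flip_at xs i) j ! k = (if k = i \<or> k = j then \<not> xs ! k else xs ! k)"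
    if "k < length xs" for k
    using that assms by (simp add: nth_flip_at)
  then show ?thesis
    using assms by (auto simp: diff_positions_def split: if_splits)
qed

lemma cube_E_iff_flip_at: "cube_E xs ys \<longleftrightarrow> (\<exists>i<length xs. ys = flip_at xs i)"
proof
  assume "cube_E xs ys"
  then have len: "length ys = length xs" and "card (diff_positions xs ys) = 1"
    unfolding cube_E_def diff_positions_def by (simp, blast)
  then obtain i where i: "diff_positions xs ys = {i}"
    by (auto simp: card_1_singleton_iff)
  then have "i < length xs"
    by (auto simp: diff_positions_def)
  moreover have "ys = flip_at xs i"
  proof (rule nth_equalityI)
    fix j assume "j < length ys"
    moreover have "j \<in> diff_positions xs ys \<longleftrightarrow> j = i"
      using i by blast
    ultimately show "ys ! j = flip_at xs i ! j"
      using len by (auto simp: diff_positions_def nth_flip_at)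
  qed (simp add: len)
  ultimately show "\<exists>i<length xs. ys = flip_at xs i"
    by blast
next
  assume "\<exists>i<length xs. ys = flip_at xs i"
  then obtain i where "i < length xs" "ys = flip_at xs i"
    by blast
  then have "{j. j < length xs \<and> xs ! j \<noteq> ys ! j} = {i}"
    by (auto simp: nth_flip_at split: if_splits)
  then show "cube_E xs ys"
    using \<open>ys = flip_at xs i\<close> by (simp add: cube_E_def)
qed

lemma cube_E_flip_at: "i < length xs \<Longrightarrow> cube_E xs (flip_at xs i)"
  by (auto simp: cube_E_iff_flip_at)

lemma cube_E_sym: "cube_E xs ys \<Longrightarrow> cube_E ys xs"
  by (auto simp: cube_E_iff_flip_at)

lemma cube_E_irrefl: "\<not> cube_E xs xs"
  by (simp add: cube_E_def)

lemma cube_E_length: "cube_E xs ys \<Longrightarrow> length ys = length xs"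
  by (simp add: cube_E_def)

lemma cube_neighbors: "{ys. cube_E xs ys} = flip_at xs ` {..<length xs}"
  by (auto simp: cube_E_iff_flip_at)

lemma inj_on_flip_at: "inj_on (flip_at xs) {..<length xs}"
proof (rule inj_onI)
  fix i j assume "i \<in> {..<length xs}" "flip_at xs i = flip_at xs j"
  then have "flip_at xs i ! i = flip_at xs j ! i"
    by simp
  then show "i = j"
    using \<open>i \<in> {..<length xs}\<close> by (auto simp: nth_flip_at split: if_splits)
qed

lemma finite_cube_neighbors: "finite {ys. cube_E xs ys}"
  by (simp add: cube_neighbors)

lemma card_cube_neighbors: "card {ys. cube_E xs ys} = length xs"
  by (simp add: cube_neighbors card_image inj_on_flip_at)

lemma finite_cube_V: "finite (cube_V d)"
  using finite_lists_length_eq[of "UNIV :: bool set" d] by (simp add: cube_V_def)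

lemma card_cube_V: "card (cube_V d) = 2 ^ d"
  using card_lists_length_eq[of "UNIV :: bool set" d] by (simp add: cube_V_def)

lemma symp_cube_E: "symp cube_E"
  by (rule sympI) (rule cube_E_sym)

lemma irreflp_cube_E: "irreflp cube_E"
  by (rule irreflpI) (rule cube_E_irrefl)

lemma K23_free_cube_E: "K23_free cube_E"
  unfolding K23_free_def
proof (intro allI impI notI)
  fix u v w1 w2 w3
  assume distinct: "u \<noteq> v \<and> w1 \<noteq> w2 \<and> w1 \<noteq> w3 \<and> w2 \<noteq> w3"
    and adj: "cube_E u w1 \<and> cube_E u w2 \<and> cube_E u w3 \<and> cube_E w1 v \<and> cube_E w2 v \<and> cube_E w3 v"
  have two_step: "\<exists>i j. w = flip_at u i \<and> diff_positions u v = {i, j}" if "cube_E u w" "cube_E w v" for w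
  proof -
    obtain i where i: "i < length u" "w = flip_at u i"
      using \<open>cube_E u w\<close> by (auto simp: cube_E_iff_flip_at)
    obtain j where j: "j < length u" "v = flip_at w j"
      using \<open>cube_E w v\<close> i by (auto simp: cube_E_iff_flip_at)
    have "i \<noteq> j"
      using distinct i j by auto
    then show ?thesis
      using i j diff_positions_flip_at_flip_at by blast
  qed
  obtain i1 j1 where 1: "w1 = flip_at u i1" "diff_positions u v = {i1, j1}"
    using two_step adj by blast
  obtain i2 j2 where 2: "w2 = flip_at u i2" "diff_positions u v = {i2, j2}"
    using two_step adj by blast
  obtain i3 j3 where 3: "w3 = flip_at u i3" "diff_positions u v = {i3, j3}"
    using two_step adj by blast
  have "card {i1, i2, i3} = 3"
    using distinct 1 2 3 by auto
  moreover have "card {i1, i2, i3} \<le> card {i1, j1}"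
    using 1 2 3 by (intro card_mono) auto
  moreover have "card {i1, j1} \<le> 2"
    by (simp add: card_insert_if)
  ultimately show False
    by linarith
qed

lemma card_edges_between_cube_V: "card (edges_between cube_E (cube_V d) (cube_V d)) = d * 2 ^ d"
proof -
  have "edges_between cube_E (cube_V d) (cube_V d) = Sigma (cube_V d) (\<lambda>x. {y. cube_E x y})"
    by (auto simp: edges_between_def cube_V_def dest: cube_E_length)
  then have "card (edges_between cube_E (cube_V d) (cube_V d)) = (\<Sum>x\<in>cube_V d. length x)"
    by (simp add: finite_cube_V finite_cube_neighbors card_cube_neighbors)
  also have "\<dots> = d * 2 ^ d"
    by (simp add: cube_V_def card_cube_V[unfolded cube_V_def])
  finally show ?thesis .
qed

lemma cube_edge_in_two_squares:
  assumes "3 \<le> length x" "cube_E x y"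
  obtains a b a' b' where "cube_E y a" "cube_E a b" "cube_E b x" "a \<noteq> x" "b \<noteq> y"
    "cube_E y a'" "cube_E a' b'" "cube_E b' x" "a' \<noteq> x" "b' \<noteq> y" "a \<noteq> a'"
proof -
  obtain r where r: "r < length x" "y = flip_at x r"
    using assms(2) by (auto simp: cube_E_iff_flip_at)
  have "2 \<le> card ({..<length x} - {r})"
    using assms(1) r(1) by simp
  then obtain T where "T \<subseteq> {..<length x} - {r}" "card T = 2"
    by (meson obtain_subset_with_card_n)
  then obtain s t where st: "s < length x" "t < length x" "s \<noteq> r" "t \<noteq> r" "s \<noteq> t"
    by (auto simp: card_2_iff)
  have square: "cube_E y (flip_at y k)" "cube_E (flip_at y k) (flip_at x k)" "cube_E (flip_at x k) x"
    "flip_at y k \<noteq> x" "flip_at x k \<noteq> y" if "k < length x" "k \<noteq> r" for k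
  proof -
    show "cube_E y (flip_at y k)" "cube_E (flip_at x k) x"
      using that r by (auto intro: cube_E_flip_at cube_E_sym)
    have "flip_at y k = flip_at (flip_at x k) r"
      using r by (simp add: flip_at_commute)
    then show "cube_E (flip_at y k) (flip_at x k)"
      using r by (metis cube_E_flip_at cube_E_sym length_flip_at)
    show "flip_at y k \<noteq> x" "flip_at x k \<noteq> y"
      using that r by (force simp: list_eq_iff_nth_eq nth_flip_at)+
  qed
  have "flip_at y s \<noteq> flip_at y t"
    using st r by (force simp: list_eq_iff_nth_eq nth_flip_at)
  then show ?thesis
    using that square[of s] square[of t] st by blast
qed

lemma card_edges_between_cube_le:
  assumes "3 \<le> d" "A \<subseteq> cube_V d" "B \<subseteq> cube_V d" and free: "bipartite_2K2_free cube_E A B"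
  shows "card (edges_between cube_E A B) \<le> 2 * d - 1"
proof (cases "edges_between cube_E A B = {}")
  case False
  have fin: "finite A" "finite B"
    using assms(2,3) finite_cube_V finite_subset by blast+
  obtain x y where xy: "x \<in> A" "y \<in> B" "cube_E x y"
    and dom: "\<And>a b. (a, b) \<in> edges_between cube_E A B \<Longrightarrow> cube_E x b \<and> cube_E a y"
    using bipartite_2K2_free_dominating_edge[OF free fin False] by blast
  let ?Nx = "{b\<in>B. cube_E x b}" and ?Ny = "{a\<in>A. cube_E a y}"
  let ?R = "{(a, b) \<in> edges_between cube_E A B. a \<noteq> x \<and> b \<noteq> y}"
  have unique: "(a, b) = (a', b')" if "(a, b) \<in> ?R" "(a', b') \<in> ?R" for a b a' b'
    using that by (intro edges_off_dominating_pair_unique[OF symp_cube_E K23_free_cube_E free dom xy(3)]) auto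
  have "finite ?R"
    using finite_edges_between[OF fin] by (rule finite_subset[rotated]) blast
  then have "card ?R \<le> 1"
    using unique unfolding One_nat_def card_le_Suc0_iff_eq[OF \<open>finite ?R\<close>] by fast
  have len: "length x = d" "length y = d"
    using xy assms(2,3) by (auto simp: cube_V_def)
  have Nx_sub: "?Nx \<subseteq> {b. cube_E x b}" and Ny_sub: "?Ny \<subseteq> {a. cube_E y a}"
    using cube_E_sym by blast+
  text \<open>Were \<open>x\<close> and \<open>y\<close> of full degree, both squares through \<open>x y\<close> would have their
    opposite edge in \<open>?R\<close>.\<close>
  have "card ?Nx + card ?Ny \<le> 2 * d - 1"
  proof (rule ccontr)
    assume "\<not> card ?Nx + card ?Ny \<le> 2 * d - 1"
    moreover have "card ?Nx \<le> d" "card ?Ny \<le> d"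
      using card_mono[OF finite_cube_neighbors Nx_sub] card_mono[OF finite_cube_neighbors Ny_sub]
      by (simp_all add: card_cube_neighbors len)
    ultimately have "card ?Nx = card {b. cube_E x b}" "card ?Ny = card {a. cube_E y a}"
      by (simp_all add: card_cube_neighbors len)
    then have full: "?Nx = {b. cube_E x b}" "?Ny = {a. cube_E y a}"
      using card_subset_eq[OF finite_cube_neighbors] Nx_sub Ny_sub by blast+
    obtain a b a' b' where "cube_E y a" "cube_E a b" "cube_E b x" "a \<noteq> x" "b \<noteq> y"
      "cube_E y a'" "cube_E a' b'" "cube_E b' x" "a' \<noteq> x" "b' \<noteq> y" "a \<noteq> a'"
      by (rule cube_edge_in_two_squares[OF _ xy(3)]) (use assms(1) len in auto)
    then have "(a, b) \<in> ?R" "(a', b') \<in> ?R" "(a, b) \<noteq> (a', b')"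
      using full cube_E_sym unfolding edges_between_def by blast+
    then show False
      using unique by blast
  qed
  moreover have "card (edges_between cube_E A B) \<le> card ?Nx + (card ?Ny - 1) + card ?R"
    using card_edges_between_le[of A B x cube_E y, OF fin xy(1,3)] .
  moreover have "x \<in> ?Ny"
    using xy by blast
  then have "1 \<le> card ?Ny"
    using fin by (auto simp: Suc_le_eq card_gt_0_iff)
  ultimately show ?thesis
    using \<open>card ?R \<le> 1\<close> by linarith
qed simp

lemma twoK2_avoiding_coloring_cube_edge_count:
  assumes "3 \<le> d" and c: "H_avoiding_coloring twoK2_V twoK2_E (cube_V d) cube_E c"
    and "c ` cube_V d \<subseteq> {..<k}"
  shows "d * 2 ^ d \<le> k * (k - 1) * (2 * d - 1)"
proof -
  have "d * 2 ^ d = card (edges_between cube_E (cube_V d) (cube_V d))"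
    by (rule card_edges_between_cube_V[symmetric])
  also have "\<dots> \<le> (\<Sum>i<k. \<Sum>j\<in>{..<k} - {i}.
      card (edges_between cube_E {v\<in>cube_V d. c v = i} {v\<in>cube_V d. c v = j}))"
    using c assms(3) finite_cube_V unfolding H_avoiding_coloring_def
    by (intro card_edges_le_sum_color_pairs) auto
  also have "\<dots> \<le> (\<Sum>i<k. \<Sum>j\<in>{..<k} - {i}. 2 * d - 1)"
    using assms(1) color_classes_bipartite_2K2_free[OF symp_cube_E irreflp_cube_E c]
    by (intro sum_mono card_edges_between_cube_le) auto
  also have "\<dots> = k * (k - 1) * (2 * d - 1)"
    by simp
  finally show ?thesis .
qed

section \<open>The cubes \<open>Q\<^sub>2\<close> and \<open>Q\<^sub>3\<close>\<close>

lemma flip_at_Cons_0 [simp]: "flip_at (x # xs) 0 = (\<not> x) # xs"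
  by (simp add: flip_at_def)

lemma flip_at_Cons_Suc [simp]: "flip_at (x # xs) (Suc i) = x # flip_at xs i"
  by (simp add: flip_at_def)

lemma cube_E_Nil [simp]: "\<not> cube_E [] ys" "\<not> cube_E xs []"
  by (auto simp: cube_E_def)

lemma cube_E_Cons_Cons [simp]:
  "cube_E (x # xs) (y # ys) \<longleftrightarrow> (if x = y then cube_E xs ys else xs = ys)"
  by (auto simp: cube_E_iff_flip_at less_Suc_eq_0_disj)

lemma cube_V_0: "cube_V 0 = {[]}"
  by (simp add: cube_V_def)

lemma cube_V_Suc: "cube_V (Suc d) = Cons False ` cube_V d \<union> Cons True ` cube_V d"
  by (auto simp: cube_V_def length_Suc_conv image_iff)

lemma cube_V_3: "cube_V 3 = {[False, False, False], [False, False, True], [False, True, False],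
    [False, True, True], [True, False, False], [True, False, True], [True, True, False], [True, True, True]}"
  by (auto simp: numeral_3_eq_3 cube_V_Suc cube_V_0)

definition cube2_coloring :: "bool list \<Rightarrow> nat" where
  "cube2_coloring xs = (if xs = [False, False] \<or> xs = [True, True] then 0 else 1)"

definition cube3_coloring :: "bool list \<Rightarrow> nat" where
  "cube3_coloring xs = (if xs = [False, False, False] \<or> xs = [True, False, True] then 0
    else if xs = [True, False, False] \<or> xs = [False, True, False] then 1
    else if xs = [True, True, False] \<or> xs = [False, True, True] then 2 else 3)"

lemma twoK2_avoiding_cube2_coloring: "H_avoiding_coloring twoK2_V twoK2_E (cube_V 2) cube_E cube2_coloring"
  unfolding twoK2_avoiding_coloring_iff[OF symp_cube_E irreflp_cube_E] proper_coloring_def induced_2K2_def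
  by (simp add: numeral_2_eq_2 cube_V_Suc cube_V_0 cube2_coloring_def)

lemma twoK2_avoiding_cube3_coloring: "H_avoiding_coloring twoK2_V twoK2_E (cube_V 3) cube_E cube3_coloring"
  unfolding twoK2_avoiding_coloring_iff[OF symp_cube_E irreflp_cube_E] proper_coloring_def induced_2K2_def
  by (simp add: cube_V_3 cube3_coloring_def card_insert_if)

lemma no_3_coloring_cube_V_3:
  assumes c: "H_avoiding_coloring twoK2_V twoK2_E (cube_V 3) cube_E c" and "c ` cube_V 3 \<subseteq> {..<3}"
  shows False
proof -
  define v where "v n = [odd n, odd (n div 2), odd (n div 4)]" for n :: nat
  have V: "v n \<in> cube_V 3" for n
    by (simp add: v_def cube_V_def)
  have color: "c (v n) \<in> {0, 1, 2}" for n
  proof -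
    have "c (v n) < 3"
      using V[of n] assms(2) by blast
    then show ?thesis
      by auto
  qed
  have edge: "c (v m) \<noteq> c (v n)" if "cube_E (v m) (v n)" for m n
    using c V that unfolding H_avoiding_coloring_def proper_coloring_def by blast
  have parallel: "\<not> (c (v k) = c (v m) \<and> c (v l) = c (v n))"
    if "induced_2K2 cube_E (v k) (v l) (v m) (v n)" for k l m n
  proof
    assume "c (v k) = c (v m) \<and> c (v l) = c (v n)"
    then have "card {c (v k), c (v l), c (v m), c (v n)} \<le> 2"
      by (simp add: card_insert_if)
    with c V that show False
      unfolding twoK2_avoiding_coloring_iff[OF symp_cube_E irreflp_cube_E] by fastforce
  qed
  have edges: "c (v 0) \<noteq> c (v 1)" "c (v 0) \<noteq> c (v 2)" "c (v 0) \<noteq> c (v 4)" "c (v 1) \<noteq> c (v 3)"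
    "c (v 1) \<noteq> c (v 5)" "c (v 2) \<noteq> c (v 3)" "c (v 2) \<noteq> c (v 6)" "c (v 3) \<noteq> c (v 7)"
    "c (v 4) \<noteq> c (v 5)" "c (v 4) \<noteq> c (v 6)" "c (v 5) \<noteq> c (v 7)" "c (v 6) \<noteq> c (v 7)"
    by (rule edge; simp add: v_def)+
  text \<open>The induced \<open>2K\<^sub>2\<close>s of \<open>Q\<^sub>3\<close> are the pairs of opposite parallel edges.\<close>
  have parallels:
    "\<not> (c (v 0) = c (v 6) \<and> c (v 1) = c (v 7))" "\<not> (c (v 0) = c (v 7) \<and> c (v 1) = c (v 6))"
    "\<not> (c (v 2) = c (v 4) \<and> c (v 3) = c (v 5))" "\<not> (c (v 2) = c (v 5) \<and> c (v 3) = c (v 4))"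
    "\<not> (c (v 0) = c (v 5) \<and> c (v 2) = c (v 7))" "\<not> (c (v 0) = c (v 7) \<and> c (v 2) = c (v 5))"
    "\<not> (c (v 1) = c (v 4) \<and> c (v 3) = c (v 6))" "\<not> (c (v 1) = c (v 6) \<and> c (v 3) = c (v 4))"
    "\<not> (c (v 0) = c (v 3) \<and> c (v 4) = c (v 7))" "\<not> (c (v 0) = c (v 7) \<and> c (v 4) = c (v 3))"
    "\<not> (c (v 1) = c (v 2) \<and> c (v 5) = c (v 6))" "\<not> (c (v 1) = c (v 6) \<and> c (v 5) = c (v 2))"
    by (rule parallel; simp add: v_def induced_2K2_def)+
  text \<open>With the eight colors as variables, \<open>auto\<close> can substitute them during its case split.\<close>
  define x0 x1 x2 x3 x4 x5 x6 x7 where "x0 = c (v 0)" and "x1 = c (v 1)" and "x2 = c (v 2)"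
    and "x3 = c (v 3)" and "x4 = c (v 4)" and "x5 = c (v 5)" and "x6 = c (v 6)" and "x7 = c (v 7)"
  show False
    using edges parallels color[of 0] color[of 1] color[of 2] color[of 3]
      color[of 4] color[of 5] color[of 6] color[of 7]
    unfolding x0_def[symmetric] x1_def[symmetric] x2_def[symmetric] x3_def[symmetric]
      x4_def[symmetric] x5_def[symmetric] x6_def[symmetric] x7_def[symmetric]
    by auto
qed

section \<open>The chromatic number\<close>

lemma sqrt_bound_of_edge_count:
  assumes "1 \<le> d" and count: "d * 2 ^ d \<le> k * (k - 1) * (2 * d - 1)"
  shows "sqrt (real d / (2 * real d - 1) * 2 ^ d) + 1 / 2 \<le> real k"
proof -
  have "1 \<le> k"
    using count assms(1) by (cases k) auto
  have "real (d * 2 ^ d) \<le> real (k * (k - 1) * (2 * d - 1))"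
    using count by (rule of_nat_mono)
  then have "real d * 2 ^ d \<le> real k * (real k - 1) * (2 * real d - 1)"
    using \<open>1 \<le> k\<close> assms(1) by (simp add: of_nat_diff)
  moreover have "2 * real d - 1 > 0"
    using assms(1) by simp
  ultimately have "real d / (2 * real d - 1) * 2 ^ d \<le> real k * (real k - 1)"
    by (simp add: field_simps)
  also have "\<dots> \<le> (real k - 1 / 2)\<^sup>2"
    by (simp add: power2_eq_square algebra_simps)
  finally have "sqrt (real d / (2 * real d - 1) * 2 ^ d) \<le> sqrt ((real k - 1 / 2)\<^sup>2)"
    by (rule real_sqrt_le_mono)
  also have "\<dots> = real k - 1 / 2"
    using \<open>1 \<le> k\<close> by simp
  finally show ?thesis
    by simp
qed

lemma chi_2K2_cube_coloring_exists:
  "\<exists>c. H_avoiding_coloring twoK2_V twoK2_E (cube_V d) cube_E c \<and> c ` cube_V d \<subseteq> {..<chi_2K2_cube d}"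
proof -
  obtain c where bij: "bij_betw c (cube_V d) {0..<card (cube_V d)}"
    using ex_bij_betw_finite_nat[OF finite_cube_V] by blast
  have "finite twoK2_V" "2 < card twoK2_V"
    by (simp_all add: twoK2_V_def)
  then have "H_avoiding_coloring twoK2_V twoK2_E (cube_V d) cube_E c"
    by (rule injective_coloring_H_avoiding[OF bij_betw_imp_inj_on[OF bij] irreflp_cube_E])
  moreover have "c ` cube_V d \<subseteq> {..<card (cube_V d)}"
    using bij by (auto simp: bij_betw_def)
  ultimately show ?thesis
    unfolding chi_2K2_cube_def by (rule chi_H_coloring_exists)
qed

lemma chi_2K2_cube_2: "chi_2K2_cube 2 = 2"
proof (rule antisym)
  show "chi_2K2_cube 2 \<le> 2"
    unfolding chi_2K2_cube_def using twoK2_avoiding_cube2_coloring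
    by (rule chi_H_le) (auto simp: numeral_2_eq_2 cube_V_Suc cube_V_0 cube2_coloring_def)
  obtain c where "H_avoiding_coloring twoK2_V twoK2_E (cube_V 2) cube_E c"
    "c ` cube_V 2 \<subseteq> {..<chi_2K2_cube 2}"
    using chi_2K2_cube_coloring_exists by blast
  moreover have "cube_E [False, False] [True, False]" "[False, False] \<in> cube_V 2" "[True, False] \<in> cube_V 2"
    by (simp_all add: cube_V_def)
  ultimately have "c [False, False] \<noteq> c [True, False]" "c [False, False] < chi_2K2_cube 2"
    "c [True, False] < chi_2K2_cube 2"
    unfolding H_avoiding_coloring_def proper_coloring_def by blast+
  then show "2 \<le> chi_2K2_cube 2"
    by presburger
qed

lemma chi_2K2_cube_3: "chi_2K2_cube 3 = 4"
proof (rule antisym)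
  show "chi_2K2_cube 3 \<le> 4"
    unfolding chi_2K2_cube_def using twoK2_avoiding_cube3_coloring
    by (rule chi_H_le) (auto simp: cube_V_3 cube3_coloring_def)
  obtain c where c: "H_avoiding_coloring twoK2_V twoK2_E (cube_V 3) cube_E c"
    and range: "c ` cube_V 3 \<subseteq> {..<chi_2K2_cube 3}"
    using chi_2K2_cube_coloring_exists by blast
  show "4 \<le> chi_2K2_cube 3"
  proof (rule ccontr)
    assume "\<not> 4 \<le> chi_2K2_cube 3"
    with range have "c ` cube_V 3 \<subseteq> {..<3}"
      by auto
    with c show False
      by (rule no_3_coloring_cube_V_3)
  qed
qed

lemma chi_2K2_cube_lower_bound:
  assumes "3 \<le> d"
  shows "sqrt (real d / (2 * real d - 1) * 2 ^ d) + 1 / 2 \<le> real (chi_2K2_cube d)"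
proof -
  obtain c where "H_avoiding_coloring twoK2_V twoK2_E (cube_V d) cube_E c"
    "c ` cube_V d \<subseteq> {..<chi_2K2_cube d}"
    using chi_2K2_cube_coloring_exists by blast
  with assms have "d * 2 ^ d \<le> chi_2K2_cube d * (chi_2K2_cube d - 1) * (2 * d - 1)"
    by (rule twoK2_avoiding_coloring_cube_edge_count)
  with assms show ?thesis
    by (intro sqrt_bound_of_edge_count) auto
qed

theorem corollary5:
  shows "chi_2K2_cube 2 = 2 \<and> chi_2K2_cube 3 = 4 \<and>
         (\<forall>d::nat. d \<ge> 4 \<longrightarrow>
            real (chi_2K2_cube d) \<ge> sqrt (real d / (2 * real d - 1) * 2 ^ d) + 1 / 2)"
  using chi_2K2_cube_2 chi_2K2_cube_3 chi_2K2_cube_lower_bound by simp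

end
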